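(* For every Turing degree $\mathbf{d}$ there exist a finite alphabet $\Sigma$ and a minimal subshift $X \subseteq \Sigma^{\mathbb{Z}}$ such that the set $\{\deg_T x : x \in X\}$ of Turing degrees of the points of $X$ equals the cone $\{\mathbf{e} : \mathbf{e} \geq_T \mathbf{d}\}$.
   Context: For a finite alphabet $\Sigma$, the shift maps $\sigma_v$ on $\Sigma^{\mathbb{Z}^d}$ are defined by $\sigma_v(c)_x = c_{x+v}$; $\Sigma^{\mathbb{Z}^d}$ carries the product (Cantor) topology. A subshift is a closed subset of $\Sigma^{\mathbb{Z}^d}$ invariant under all shifts; its elements are called points. A subshift $X$ is minimal if it is nonempty and contains no nonempty subshift $Y \subsetneq X$ (equivalently, all points of $X$ contain the same finite patterns; equivalently, $X$ is the orbit closure of each of its points). The Turing degree of a point of $\Sigma^{\mathbb{Z}^d}$ is the Turing degree of the sequence obtained by listing its values along a fixed computable bijection $\mathbb{N} \to \mathbb{Z}^d$ (with symbols coded by a fixed computable coding). The cone above $\mathbf{d}$ is the set of degrees $\geq_T \mathbf{d}$. *)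

theory Defs
  imports Main "HOL-Library.Nat_Bijection"
begin

section \<open>Query computability (Kleene partial recursive functions relative to a given function)\<close>

datatype rf = Zero | Succ | Proj nat | Query | Comp rf "rf list" | Prim rf rf | Mu rf

inductive rf_eval :: "(nat \<Rightarrow> nat) \<Rightarrow> rf \<Rightarrow> nat list \<Rightarrow> nat \<Rightarrow> bool" for f where
  zero: "rf_eval f Zero xs 0"
| succ: "rf_eval f Succ (x # xs) (Suc x)"
| proj: "i < length xs \<Longrightarrow> rf_eval f (Proj i) xs (xs ! i)"
| query: "rf_eval f Query (x # xs) (f x)"
| comp: "list_all2 (\<lambda>g y. rf_eval f g xs y) gs ys \<Longrightarrow> rf_eval f h ys v \<Longrightarrow> rf_eval f (Comp h gs) xs v"
| prim0: "rf_eval f b xs v \<Longrightarrow> rf_eval f (Prim b s) (0 # xs) v"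
| primS: "rf_eval f (Prim b s) (n # xs) r \<Longrightarrow> rf_eval f s (n # r # xs) v
          \<Longrightarrow> rf_eval f (Prim b s) (Suc n # xs) v"
| mu: "rf_eval f g (n # xs) 0 \<Longrightarrow> (\<forall>m<n. \<exists>w. w \<noteq> 0 \<and> rf_eval f g (m # xs) w)
          \<Longrightarrow> rf_eval f (Mu g) xs n"

definition turing_red :: "(nat \<Rightarrow> nat) \<Rightarrow> (nat \<Rightarrow> nat) \<Rightarrow> bool" where
  "turing_red g f \<longleftrightarrow> (\<exists>t. \<forall>n. rf_eval f t [n] (g n))"

definition turing_equiv :: "(nat \<Rightarrow> nat) \<Rightarrow> (nat \<Rightarrow> nat) \<Rightarrow> bool" where
  "turing_equiv f g \<longleftrightarrow> turing_red f g \<and> turing_red g f"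

definition tdeg :: "(nat \<Rightarrow> nat) \<Rightarrow> (nat \<Rightarrow> nat) set" where
  "tdeg f = {g. turing_equiv g f}"

definition shift :: "int \<Rightarrow> (int \<Rightarrow> nat) \<Rightarrow> (int \<Rightarrow> nat)" where
  "shift v c = (\<lambda>x. c (x + v))"

text \<open>Closed in the product (Cantor) topology of the discrete finite alphabet.\<close>
definition closed_cfg :: "(int \<Rightarrow> nat) set \<Rightarrow> bool" where
  "closed_cfg X \<longleftrightarrow>
     (\<forall>c. (\<forall>n::nat. \<exists>y\<in>X. \<forall>i. \<bar>i\<bar> \<le> int n \<longrightarrow> y i = c i) \<longrightarrow> c \<in> X)"

definition subshift :: "nat \<Rightarrow> (int \<Rightarrow> nat) set \<Rightarrow> bool" where
  "subshift k X \<longleftrightarrow> X \<subseteq> {c. \<forall>i. c i < k} \<and> closed_cfg X \<and>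
     (\<forall>c\<in>X. \<forall>v. shift v c \<in> X)"

definition minimal_subshift :: "nat \<Rightarrow> (int \<Rightarrow> nat) set \<Rightarrow> bool" where
  "minimal_subshift k X \<longleftrightarrow> subshift k X \<and> X \<noteq> {} \<and>
     (\<forall>Y. subshift k Y \<and> Y \<noteq> {} \<and> Y \<subseteq> X \<longrightarrow> Y = X)"

definition point_code :: "(int \<Rightarrow> nat) \<Rightarrow> (nat \<Rightarrow> nat)" where
  "point_code c = c \<circ> int_decode"

end

theory Submission
  imports Defs
begin

(* We realise the cone above d by a Toeplitz subshift X_d over the alphabet {0,1,2}.
   A point y of X_d follows a 2-adic skeleton r (a coherent sequence of residues
   r m mod 2^m): i has level l when i + r l is divisible by 2^l but i + r (l+1) is not
   divisible by 2^(l+1), and then y i = symbol d l, the marker 2 on even levels and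
   the k-th bit of the graph of d on level 2k+1.  At most one integer lies in every
   class; it may carry any symbol that recurs in the level sequence.  The markers reveal the parity of each level, so the
   skeleton of a point can be read off it level by level (base).  This shows that X_d
   is closed, that every window of one point occurs in every other point (minimality),
   and that every point computes d.  Finally, for e \<ge>T d a skeleton whose digits encode
   e and leave no integer of infinite level yields a point Turing equivalent to e. *)

section \<open>Relative computability\<close>

fun subst_query :: "rf \<Rightarrow> rf \<Rightarrow> rf" where
  "subst_query s Query = Comp s [Proj 0]"
| "subst_query s (Comp h gs) = Comp (subst_query s h) (map (subst_query s) gs)"
| "subst_query s (Prim b t) = Prim (subst_query s b) (subst_query s t)"
| "subst_query s (Mu g) = Mu (subst_query s g)"
| "subst_query s Zero = Zero"
| "subst_query s Succ = Succ"
| "subst_query s (Proj i) = Proj i"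

lemma subst_query_eval:
  assumes "rf_eval f t xs v" and s: "\<forall>x. rf_eval h s [x] (f x)"
  shows "rf_eval h (subst_query s t) xs v"
  using assms(1)
proof (induction rule: rf_eval.induct)
  case (zero xs) then show ?case by (simp add: rf_eval.zero)
next
  case (succ x xs) then show ?case by (simp add: rf_eval.succ)
next
  case (proj i xs) then show ?case by (simp add: rf_eval.proj)
next
  case (query x xs)
  have "rf_eval h (Proj 0) (x # xs) x" using rf_eval.proj[of 0 "x#xs" h] by simp
  then show ?case using s by (auto intro!: rf_eval.comp[where ys="[x]"])
next
  case (comp xs gs ys hh v)
  have "list_all2 (\<lambda>g. rf_eval h g xs) (map (subst_query s) gs) ys"
    using comp(1) by (auto simp: list_all2_map1 elim: list_all2_mono)
  then show ?case using comp by (auto intro: rf_eval.comp)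
next
  case (prim0 b xs v s') then show ?case by (auto intro: rf_eval.prim0)
next
  case (primS b s' n xs r v) then show ?case by (auto intro: rf_eval.primS)
next
  case (mu g n xs) then show ?case by (auto intro!: rf_eval.mu)
qed

text \<open>Reducibility is transitive: substitute a program for the oracle of another.\<close>
lemma turing_red_trans:
  "turing_red g f \<Longrightarrow> turing_red f h \<Longrightarrow> turing_red g h"
  unfolding turing_red_def
proof -
  assume "\<exists>t. \<forall>n. rf_eval f t [n] (g n)" "\<exists>t. \<forall>n. rf_eval h t [n] (f n)"
  then obtain t s where t: "\<forall>n. rf_eval f t [n] (g n)" and s: "\<forall>n. rf_eval h s [n] (f n)" by blast
  show "\<exists>t. \<forall>n. rf_eval h t [n] (g n)"
    using subst_query_eval[OF _ s] t by blast
qed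

lemma turing_red_refl: "turing_red f f"
  unfolding turing_red_def by (metis rf_eval.query)

lemma tdeg_eq: "turing_equiv f g \<Longrightarrow> tdeg f = tdeg g"
  unfolding tdeg_def turing_equiv_def using turing_red_trans by blast

definition computable :: "(nat \<Rightarrow> nat) \<Rightarrow> nat \<Rightarrow> (nat list \<Rightarrow> nat) \<Rightarrow> bool" where
  "computable f k F \<longleftrightarrow> (\<exists>t. \<forall>xs. length xs = k \<longrightarrow> rf_eval f t xs (F xs))"

named_theorems computable_intros

lemma computable_ext:
  "computable f k F \<Longrightarrow> (\<And>xs. length xs = k \<Longrightarrow> F xs = G xs) \<Longrightarrow> computable f k G"
  unfolding computable_def by (metis (no_types, lifting))

fun const_prog :: "nat \<Rightarrow> rf" where
  "const_prog 0 = Zero" | "const_prog (Suc n) = Comp Succ [const_prog n]"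

lemma const_prog_eval: "rf_eval f (const_prog c) xs c"
proof (induction c)
  case 0 then show ?case by (simp add: rf_eval.zero)
next
  case (Suc c) then show ?case by (auto intro!: rf_eval.comp[where ys="[c]"] rf_eval.succ[of f c "[]", simplified])
qed

lemma computable_const[computable_intros]: "computable f k (\<lambda>xs. c)"
  unfolding computable_def using const_prog_eval by blast

lemma computable_proj[computable_intros]:
  "i < k \<Longrightarrow> computable f k (\<lambda>xs. xs ! i)"
  unfolding computable_def by (metis rf_eval.proj)

lemma computable_query[computable_intros]:
  "computable f k A \<Longrightarrow> computable f k (\<lambda>xs. f (A xs))"
  unfolding computable_def
proof -
  assume "\<exists>t. \<forall>xs. length xs = k \<longrightarrow> rf_eval f t xs (A xs)"
  then obtain t where t: "\<forall>xs. length xs = k \<longrightarrow> rf_eval f t xs (A xs)" by blast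
  have "\<forall>xs. length xs = k \<longrightarrow> rf_eval f (Comp Query [t]) xs (f (A xs))"
    using t by (auto intro!: rf_eval.comp[where ys="[A _]"] rf_eval.query[of f _ "[]", simplified])
  then show "\<exists>t. \<forall>xs. length xs = k \<longrightarrow> rf_eval f t xs (f (A xs))" by blast
qed

lemma computable_Suc[computable_intros]:
  "computable f k A \<Longrightarrow> computable f k (\<lambda>xs. Suc (A xs))"
  unfolding computable_def
proof -
  assume "\<exists>t. \<forall>xs. length xs = k \<longrightarrow> rf_eval f t xs (A xs)"
  then obtain t where t: "\<forall>xs. length xs = k \<longrightarrow> rf_eval f t xs (A xs)" by blast
  have "\<forall>xs. length xs = k \<longrightarrow> rf_eval f (Comp Succ [t]) xs (Suc (A xs))"
    using t by (auto intro!: rf_eval.comp[where ys="[A _]"] rf_eval.succ[of f _ "[]", simplified])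
  then show "\<exists>t. \<forall>xs. length xs = k \<longrightarrow> rf_eval f t xs (Suc (A xs))" by blast
qed

lemma computable_list: "\<forall>G\<in>set Gs. computable f k G \<Longrightarrow>
   \<exists>ts. \<forall>xs. length xs = k \<longrightarrow> list_all2 (\<lambda>g. rf_eval f g xs) ts (map (\<lambda>G. G xs) Gs)"
proof (induction Gs)
  case Nil then show ?case by auto
next
  case (Cons G Gs)
  then obtain ts where ts: "\<forall>xs. length xs = k \<longrightarrow> list_all2 (\<lambda>g. rf_eval f g xs) ts (map (\<lambda>G. G xs) Gs)" by auto
  obtain t where t: "\<forall>xs. length xs = k \<longrightarrow> rf_eval f t xs (G xs)" using Cons(2) unfolding computable_def by auto
  show ?case using ts t by (intro exI[of _ "t # ts"]) auto
qed

lemma computable_compose: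
  "computable f m H \<Longrightarrow> length Gs = m \<Longrightarrow> \<forall>G\<in>set Gs. computable f k G \<Longrightarrow>
   computable f k (\<lambda>xs. H (map (\<lambda>G. G xs) Gs))"
proof -
  assume H: "computable f m H" and l: "length Gs = m" and G: "\<forall>G\<in>set Gs. computable f k G"
  obtain ts where ts: "\<forall>xs. length xs = k \<longrightarrow> list_all2 (\<lambda>g. rf_eval f g xs) ts (map (\<lambda>G. G xs) Gs)"
    using computable_list[OF G] by auto
  obtain h where h: "\<forall>xs. length xs = m \<longrightarrow> rf_eval f h xs (H xs)" using H unfolding computable_def by auto
  have "\<forall>xs. length xs = k \<longrightarrow> rf_eval f (Comp h ts) xs (H (map (\<lambda>G. G xs) Gs))"
    using ts h l by (auto intro: rf_eval.comp)
  then show ?thesis unfolding computable_def by blast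
qed

lemma computable_comp1:
  "computable f 1 H \<Longrightarrow> computable f k A \<Longrightarrow> computable f k (\<lambda>xs. H [A xs])"
  using computable_compose[of f 1 H "[A]" k] by simp

lemma computable_comp2:
  "computable f 2 H \<Longrightarrow> computable f k A \<Longrightarrow> computable f k B \<Longrightarrow> computable f k (\<lambda>xs. H [A xs, B xs])"
  using computable_compose[of f 2 H "[A,B]" k] by simp

lemma computable_comp3:
  "computable f 3 H \<Longrightarrow> computable f k A \<Longrightarrow> computable f k B \<Longrightarrow> computable f k C \<Longrightarrow>
   computable f k (\<lambda>xs. H [A xs, B xs, C xs])"
  using computable_compose[of f 3 H "[A,B,C]" k] by (simp add: numeral_3_eq_3)

lemma computable_app:
  "computable f 1 (\<lambda>xs. h (xs ! 0)) \<Longrightarrow> computable f k A \<Longrightarrow> computable f k (\<lambda>xs. h (A xs))"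
  using computable_comp1[of f "\<lambda>xs. h (xs ! 0)" k A] by simp

lemma computable_rec_nat:
  assumes "computable f k B" "computable f (Suc (Suc k)) S"
    and F: "\<And>n ys. F (n # ys) = rec_nat (B ys) (\<lambda>n r. S (n # r # ys)) n"
  shows "computable f (Suc k) F"
proof -
  obtain b s where b: "\<forall>xs. length xs = k \<longrightarrow> rf_eval f b xs (B xs)"
    and s: "\<forall>xs. length xs = Suc (Suc k) \<longrightarrow> rf_eval f s xs (S xs)"
    using assms(1,2) unfolding computable_def by blast
  have "rf_eval f (Prim b s) (n # ys) (F (n # ys))" if "length ys = k" for n ys
    unfolding F
  proof (induction n)
    case 0 then show ?case using b that by (auto intro: rf_eval.prim0)
  next
    case (Suc n)
    show ?case by (rule rf_eval.primS[OF Suc.IH]) (use s that in auto)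
  qed
  then show ?thesis unfolding computable_def by (metis length_Suc_conv)
qed

lemma computable_mu:
  "computable f (Suc k) G \<Longrightarrow> (\<And>xs. length xs = k \<Longrightarrow> \<exists>n. G (n # xs) = 0) \<Longrightarrow>
   computable f k (\<lambda>xs. LEAST n. G (n # xs) = 0)"
proof -
  assume "computable f (Suc k) G" and ex: "\<And>xs. length xs = k \<Longrightarrow> \<exists>n. G (n # xs) = 0"
  then obtain g where g: "\<forall>xs. length xs = Suc k \<longrightarrow> rf_eval f g xs (G xs)" unfolding computable_def by blast
  have "rf_eval f (Mu g) xs (LEAST n. G (n # xs) = 0)" if "length xs = k" for xs
  proof (rule rf_eval.mu)
    show "rf_eval f g ((LEAST n. G (n # xs) = 0) # xs) 0"
      using g[rule_format, of "(LEAST n. G (n # xs) = 0) # xs"] that LeastI_ex[OF ex[OF that]] by simp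
    show "\<forall>m<(LEAST n. G (n # xs) = 0). \<exists>w. w \<noteq> 0 \<and> rf_eval f g (m # xs) w"
    proof (intro allI impI)
      fix m assume "m < (LEAST n. G (n # xs) = 0)"
      then have "G (m # xs) \<noteq> 0" by (rule not_less_Least)
      moreover have "rf_eval f g (m # xs) (G (m # xs))" using g that by simp
      ultimately show "\<exists>w. w \<noteq> 0 \<and> rf_eval f g (m # xs) w" by blast
    qed
  qed
  then show ?thesis unfolding computable_def by blast
qed

lemma computable_add2: "computable f 2 (\<lambda>xs. xs ! 0 + xs ! 1)"
proof -
  have eq: "rec_nat b (\<lambda>_ r. Suc r) n = n + b" for n b :: nat by (induction n) auto
  have "computable f (Suc 1) (\<lambda>xs. xs ! 0 + xs ! 1)"
    by (rule computable_rec_nat[where B="\<lambda>ys. ys ! 0" and S="\<lambda>zs. Suc (zs ! 1)"]; (intro computable_intros)?; simp add: eq)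
  then show ?thesis by (simp add: numeral_2_eq_2)
qed

lemma computable_add[computable_intros]:
  "computable f k A \<Longrightarrow> computable f k B \<Longrightarrow> computable f k (\<lambda>xs. A xs + B xs)"
  using computable_comp2[OF computable_add2, of f k A B] by simp

lemma computable_mult2: "computable f 2 (\<lambda>xs. xs ! 0 * xs ! 1)"
proof -
  have eq: "rec_nat 0 (\<lambda>_ r. r + b) n = n * b" for n b :: nat by (induction n) auto
  have "computable f (Suc 1) (\<lambda>xs. xs ! 0 * xs ! 1)"
    by (rule computable_rec_nat[where B="\<lambda>ys. 0" and S="\<lambda>zs. zs ! 1 + zs ! 2"]; (intro computable_intros)?; simp add: eq numeral_2_eq_2)
  then show ?thesis by (simp add: numeral_2_eq_2)
qed

lemma computable_mult[computable_intros]: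
  "computable f k A \<Longrightarrow> computable f k B \<Longrightarrow> computable f k (\<lambda>xs. A xs * B xs)"
  using computable_comp2[OF computable_mult2, of f k A B] by simp

lemma computable_pred1: "computable f 1 (\<lambda>xs. xs ! 0 - 1)"
proof -
  have eq: "rec_nat 0 (\<lambda>m _. m) n = n - 1" for n :: nat by (cases n) auto
  have "computable f (Suc 0) (\<lambda>xs. xs ! 0 - 1)"
    by (rule computable_rec_nat[where B="\<lambda>ys. 0" and S="\<lambda>zs. zs ! 0"]; (intro computable_intros)?; simp add: eq)
  then show ?thesis by simp
qed

lemma computable_pred[computable_intros]:
  "computable f k A \<Longrightarrow> computable f k (\<lambda>xs. A xs - 1)"
  using computable_comp1[OF computable_pred1, of f k A] by simp

lemma computable_sub2: "computable f 2 (\<lambda>xs. xs ! 1 - xs ! 0)"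
proof -
  have eq: "rec_nat b (\<lambda>_ r. r - Suc 0) n = b - n" for n b :: nat by (induction n) auto
  have "computable f (Suc 1) (\<lambda>xs. xs ! 1 - xs ! 0)"
    by (rule computable_rec_nat[where B="\<lambda>ys. ys ! 0" and S="\<lambda>zs. zs ! 1 - 1"]; (intro computable_intros)?; simp add: eq)
  then show ?thesis by (simp add: numeral_2_eq_2)
qed

lemma computable_sub[computable_intros]:
  "computable f k A \<Longrightarrow> computable f k B \<Longrightarrow> computable f k (\<lambda>xs. A xs - B xs)"
  using computable_comp2[OF computable_sub2, of f k B A] by simp

lemma computable_cond3: "computable f 3 (\<lambda>xs. if xs ! 0 = 0 then xs ! 1 else xs ! 2)"
proof -
  have eq: "rec_nat a (\<lambda>_ _. b) n = (if n = 0 then a else b)" for n a b :: nat by (cases n) auto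
  have "computable f (Suc 2) (\<lambda>xs. if xs ! 0 = 0 then xs ! 1 else xs ! 2)"
    by (rule computable_rec_nat[where B="\<lambda>ys. ys ! 0" and S="\<lambda>zs. zs ! 3"]; (intro computable_intros)?; simp add: eq numeral_3_eq_3)
  then show ?thesis by (simp add: numeral_3_eq_3)
qed

definition decidable :: "(nat \<Rightarrow> nat) \<Rightarrow> nat \<Rightarrow> (nat list \<Rightarrow> bool) \<Rightarrow> bool" where
  "decidable f k P \<longleftrightarrow> computable f k (\<lambda>xs. if P xs then 1 else 0)"

lemma computable_if[computable_intros]:
  "decidable f k P \<Longrightarrow> computable f k A \<Longrightarrow> computable f k B \<Longrightarrow>
   computable f k (\<lambda>xs. if P xs then A xs else B xs)"
  unfolding decidable_def
  by (rule computable_ext[OF computable_comp3[OF computable_cond3, of f k "\<lambda>xs. if P xs then 1 else 0" B A]])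
    auto

lemma decidable_less[computable_intros]:
  assumes "computable f k A" "computable f k B" shows "decidable f k (\<lambda>xs. A xs < B xs)"
proof -
  have "computable f k (\<lambda>xs. 1 - (Suc (A xs) - B xs))" using assms by (intro computable_intros)
  then show ?thesis unfolding decidable_def by (rule computable_ext) simp
qed

lemma decidable_eq[computable_intros]:
  assumes "computable f k A" "computable f k B" shows "decidable f k (\<lambda>xs. A xs = B xs)"
proof -
  have "computable f k (\<lambda>xs. 1 - ((A xs - B xs) + (B xs - A xs)))" using assms by (intro computable_intros)
  then show ?thesis unfolding decidable_def by (rule computable_ext) simp
qed

lemma decidable_not[computable_intros]:
  assumes "decidable f k P" shows "decidable f k (\<lambda>xs. \<not> P xs)"
proof -
  have "computable f k (\<lambda>xs. 1 - (if P xs then 1 else 0))"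
    using assms by (intro computable_intros)
  then show ?thesis unfolding decidable_def by (rule computable_ext) simp
qed

lemma decidable_conj[computable_intros]:
  assumes "decidable f k P" "decidable f k Q" shows "decidable f k (\<lambda>xs. P xs \<and> Q xs)"
proof -
  have "computable f k (\<lambda>xs. (if P xs then 1 else 0) * (if Q xs then 1 else 0))"
    using assms by (intro computable_intros)
  then show ?thesis unfolding decidable_def by (rule computable_ext) simp
qed

lemma decidable_disj[computable_intros]:
  assumes "decidable f k P" "decidable f k Q" shows "decidable f k (\<lambda>xs. P xs \<or> Q xs)"
proof -
  have "computable f k (\<lambda>xs. if P xs then 1 else (if Q xs then 1 else 0))"
    using assms by (intro computable_intros)
  then show ?thesis unfolding decidable_def by (rule computable_ext) simp
qed

lemma decidable_if[computable_intros]: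
  assumes "decidable f k C" "decidable f k P" "decidable f k Q"
  shows "decidable f k (\<lambda>xs. if C xs then P xs else Q xs)"
proof -
  have "decidable f k (\<lambda>xs. (C xs \<and> P xs) \<or> (\<not> C xs \<and> Q xs))" using assms by (intro computable_intros)
  then show ?thesis by (rule back_subst[of "decidable f k"]) auto
qed

lemma computable_LEAST:
  assumes P: "decidable f (Suc k) P" and ex: "\<And>xs. length xs = k \<Longrightarrow> \<exists>n. P (n # xs)"
  shows "computable f k (\<lambda>xs. LEAST n. P (n # xs))"
proof -
  have eq: "(1 - (if Q then 1 else 0) = (0::nat)) = Q" for Q by simp
  have "computable f k (\<lambda>xs. LEAST n. (\<lambda>ys. 1 - (if P ys then 1 else 0)) (n # xs) = (0::nat))"
  proof (rule computable_mu)
    show "computable f (Suc k) (\<lambda>ys. 1 - (if P ys then 1 else 0))" using P by (intro computable_intros)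
  qed (use ex in \<open>simp only: eq\<close>)
  then show ?thesis unfolding eq .
qed

text \<open>Division is a search for the least quotient bound.\<close>
lemma computable_div2: "computable f 2 (\<lambda>xs. xs ! 0 div xs ! 1)"
proof -
  have search: "computable f 2 (\<lambda>xs. LEAST q. (q # xs) ! 2 = 0 \<or> (q # xs) ! 1 < Suc ((q # xs) ! 0) * (q # xs) ! 2)"
  proof (rule computable_LEAST)
    show "\<exists>q. (q # xs) ! 2 = 0 \<or> (q # xs) ! 1 < Suc ((q # xs) ! 0) * (q # xs) ! 2" for xs :: "nat list"
      by (rule exI[of _ "xs ! 0"]) (cases "xs ! 1", auto)
  qed (intro computable_intros; simp)
  have least_div: "(LEAST q. m = 0 \<or> n < Suc q * m) = n div m" for n m :: nat
  proof (cases "m = 0")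
    case False
    show ?thesis
    proof (rule Least_equality)
      show "m = 0 \<or> n < Suc (n div m) * m"
        using mod_less_divisor[of m n] div_mult_mod_eq[of n m] False unfolding mult_Suc by linarith
      show "n div m \<le> q" if "m = 0 \<or> n < Suc q * m" for q
      proof -
        have "n < Suc q * m" using that False by simp
        then show ?thesis using less_mult_imp_div_less less_Suc_eq_le by blast
      qed
    qed
  qed simp
  from search show ?thesis by (rule computable_ext) (simp only: numeral_2_eq_2 One_nat_def nth_Cons_0 nth_Cons_Suc least_div)
qed

lemma computable_div[computable_intros]:
  "computable f k A \<Longrightarrow> computable f k B \<Longrightarrow> computable f k (\<lambda>xs. A xs div B xs)"
  using computable_comp2[OF computable_div2, of f k A B] by simp

lemma computable_mod[computable_intros]:
  assumes "computable f k A" "computable f k B" shows "computable f k (\<lambda>xs. A xs mod B xs)"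
proof -
  have "computable f k (\<lambda>xs. A xs - B xs * (A xs div B xs))" using assms by (intro computable_intros)
  then show ?thesis by (rule computable_ext) (simp add: minus_mult_div_eq_mod)
qed

lemma computable_pow2_1: "computable f 1 (\<lambda>xs. 2 ^ (xs ! 0))"
proof -
  have eq: "rec_nat (Suc 0) (\<lambda>_ r. r * 2) n = (2::nat) ^ n" for n :: nat by (induction n) auto
  have "computable f (Suc 0) (\<lambda>xs. 2 ^ (xs ! 0))"
    by (rule computable_rec_nat[where B="\<lambda>ys. 1" and S="\<lambda>zs. zs ! 1 * 2"]; (intro computable_intros)?; simp add: eq)
  then show ?thesis by simp
qed

lemma computable_pow2[computable_intros]:
  "computable f k A \<Longrightarrow> computable f k (\<lambda>xs. 2 ^ (A xs))"
  using computable_comp1[OF computable_pow2_1, of f k A] by simp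

lemma decidable_dvd[computable_intros]:
  "computable f k A \<Longrightarrow> computable f k B \<Longrightarrow> decidable f k (\<lambda>xs. A xs dvd B xs)"
  by (subst dvd_eq_mod_eq_0) (intro decidable_eq computable_mod computable_const)

lemma decidable_even[computable_intros]:
  "computable f k A \<Longrightarrow> decidable f k (\<lambda>xs. even (A xs))"
  by (intro decidable_dvd computable_const)

text \<open>Inverting the Cantor pairing needs the largest triangular number below its argument.\<close>
definition triangle_root :: "nat \<Rightarrow> nat" where
  "triangle_root k = (LEAST s. k < triangle (Suc s))"

lemma triangle_ge: "n \<le> triangle n"
  by (induction n) auto

lemma triangle_root_props:
  "triangle (triangle_root k) \<le> k \<and> k < triangle (Suc (triangle_root k))"
proof -
  have ex: "k < triangle (Suc k)" using triangle_ge[of "Suc k"] by simp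
  have above: "k < triangle (Suc (triangle_root k))" unfolding triangle_root_def by (rule LeastI[where P="\<lambda>s. k < triangle (Suc s)", OF ex])
  have below: "triangle (triangle_root k) \<le> k"
  proof (cases "triangle_root k")
    case 0 then show ?thesis by simp
  next
    case (Suc s)
    then have "s < triangle_root k" by simp
    then have "\<not> k < triangle (Suc s)" unfolding triangle_root_def by (rule not_less_Least)
    then show ?thesis using Suc by simp
  qed
  show ?thesis using above below by simp
qed

lemma prod_decode_triangle_root:
  "prod_decode k = (k - triangle (triangle_root k), triangle_root k - (k - triangle (triangle_root k)))"
proof -
  let ?s = "triangle_root k"
  have bounds: "triangle ?s \<le> k" "k < triangle ?s + Suc ?s" using triangle_root_props[of k] by auto
  have "prod_encode (k - triangle ?s, ?s - (k - triangle ?s)) = k"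
    using bounds by (simp add: prod_encode_def)
  then show ?thesis by (metis prod_encode_inverse)
qed

lemma computable_triangle[computable_intros]:
  "computable f k A \<Longrightarrow> computable f k (\<lambda>xs. triangle (A xs))"
  unfolding triangle_def by (intro computable_intros)

lemma computable_triangle_root1: "computable f 1 (\<lambda>xs. triangle_root (xs ! 0))"
proof -
  have "computable f 1 (\<lambda>xs. LEAST s. (\<lambda>ys. ys ! 1 < triangle (Suc (ys ! 0))) (s # xs))"
  proof (rule computable_LEAST)
    show "\<exists>s. (s # xs) ! 1 < triangle (Suc ((s # xs) ! 0))" for xs :: "nat list"
      using triangle_ge[of "Suc (xs ! 0)"] by (intro exI[of _ "xs ! 0"]) simp
  qed (intro computable_intros; simp)
  then show ?thesis unfolding triangle_root_def by simp
qed

lemma computable_triangle_root[computable_intros]: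
  "computable f k A \<Longrightarrow> computable f k (\<lambda>xs. triangle_root (A xs))"
  by (rule computable_app[OF computable_triangle_root1])

lemma computable_prod_decode_fst[computable_intros]:
  "computable f k A \<Longrightarrow> computable f k (\<lambda>xs. fst (prod_decode (A xs)))"
  unfolding prod_decode_triangle_root fst_conv by (intro computable_intros)

lemma computable_prod_decode_snd[computable_intros]:
  "computable f k A \<Longrightarrow> computable f k (\<lambda>xs. snd (prod_decode (A xs)))"
  unfolding prod_decode_triangle_root snd_conv by (intro computable_intros)

lemma computable_prod_encode[computable_intros]:
  "computable f k A \<Longrightarrow> computable f k B \<Longrightarrow> computable f k (\<lambda>xs. prod_encode (A xs, B xs))"
  unfolding prod_encode_def prod.case by (intro computable_intros)

lemma turing_red_iff_computable:
  "turing_red g f \<longleftrightarrow> computable f 1 (\<lambda>xs. g (xs ! 0))"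
  unfolding turing_red_def computable_def
  by (metis (no_types, lifting) length_Cons list.size(3) One_nat_def nth_Cons_0 length_Suc_conv length_0_conv)

lemma computable_red:
  "turing_red g f \<Longrightarrow> computable f k A \<Longrightarrow> computable f k (\<lambda>xs. g (A xs))"
  unfolding turing_red_iff_computable by (rule computable_app)

text \<open>Points use a finite alphabet, so d enters them through the 0-1 characteristic sequence of
  its graph; a function and this sequence compute each other.\<close>
definition graph_bit :: "(nat \<Rightarrow> nat) \<Rightarrow> nat \<Rightarrow> nat" where
  "graph_bit g k = (if g (fst (prod_decode k)) = snd (prod_decode k) then 1 else 0)"

lemma graph_bit_le: "graph_bit g k \<le> 1" by (simp add: graph_bit_def)

lemma graph_bit_prod_encode: "graph_bit g (prod_encode (n, v)) = (if g n = v then 1 else 0)"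
  by (simp add: graph_bit_def)

lemma computable_graph_bit:
  assumes "turing_red g f" and "computable f k A"
  shows "computable f k (\<lambda>xs. graph_bit g (A xs))"
proof -
  have applied: "computable f k (\<lambda>xs. g (fst (prod_decode (A xs))))"
    by (rule computable_red[OF assms(1)]) (intro computable_intros assms(2))
  show ?thesis unfolding graph_bit_def using assms(2) by (intro computable_intros applied)
qed

text \<open>g n is found as the unique v whose pair with n lies on the graph.\<close>
lemma turing_red_from_graph_bit:
  assumes bits: "computable f 1 (\<lambda>xs. graph_bit g (xs ! 0))"
  shows "turing_red g f"
proof -
  have "computable f 1 (\<lambda>xs. LEAST v. (\<lambda>ys. graph_bit g (prod_encode (ys ! 1, ys ! 0)) = 1) (v # xs))"
  proof (rule computable_LEAST)
    show "\<exists>v. graph_bit g (prod_encode ((v # xs) ! 1, (v # xs) ! 0)) = 1" for xs :: "nat list"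
      by (intro exI[of _ "g (xs ! 0)"]) (simp add: graph_bit_prod_encode)
  qed (intro computable_intros computable_app[OF bits]; simp)
  moreover have "(LEAST v. g n = v) = g n" for n by (rule Least_equality) auto
  ultimately have "computable f 1 (\<lambda>xs. g (xs ! 0))"
    by (elim computable_ext) (simp add: graph_bit_prod_encode)
  then show ?thesis unfolding turing_red_iff_computable .
qed

section \<open>2-adic skeletons\<close>

text \<open>A skeleton r is a coherent sequence of residues, i.e. a 2-adic integer; in_class r i m says that i lies in the residue class of level m.\<close>
definition coherent :: "(nat \<Rightarrow> int) \<Rightarrow> bool" where
  "coherent r \<longleftrightarrow> (\<forall>m. r (Suc m) mod 2^m = r m mod 2^m)"

definition in_class :: "(nat \<Rightarrow> int) \<Rightarrow> int \<Rightarrow> nat \<Rightarrow> bool" where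
  "in_class r i m \<longleftrightarrow> (2::int)^m dvd (i + r m)"

lemma coherent_le:
  "coherent r \<Longrightarrow> m \<le> n \<Longrightarrow> r n mod 2^m = r m mod 2^m"
proof (induction n)
  case 0 then show ?case by simp
next
  case (Suc n)
  show ?case
  proof (cases "m = Suc n")
    case True then show ?thesis by simp
  next
    case False
    then have "m \<le> n" using Suc by simp
    have "r (Suc n) mod 2^m = (r (Suc n) mod 2^n) mod 2^m"
      using \<open>m \<le> n\<close> by (simp add: mod_mod_cancel le_imp_power_dvd)
    also have "\<dots> = (r n mod 2^n) mod 2^m" using Suc.prems(1) unfolding coherent_def by simp
    also have "\<dots> = r n mod 2^m" using \<open>m \<le> n\<close> by (simp add: mod_mod_cancel le_imp_power_dvd)
    finally show ?thesis using Suc.IH[OF Suc.prems(1) \<open>m \<le> n\<close>] by simp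
  qed
qed

lemma coherent_dvd:
  "coherent r \<Longrightarrow> m \<le> n \<Longrightarrow> (2::int)^m dvd (r n - r m)"
  using coherent_le mod_eq_dvd_iff by blast

lemma in_class_mono:
  "coherent r \<Longrightarrow> m \<le> n \<Longrightarrow> in_class r i n \<Longrightarrow> in_class r i m"
  unfolding in_class_def
proof -
  assume c: "coherent r" and mn: "m \<le> n" and d: "(2::int) ^ n dvd i + r n"
  have "(2::int)^m dvd (i + r n)" using d mn by (meson dvd_trans le_imp_power_dvd)
  moreover have "(2::int)^m dvd (r n - r m)" using coherent_dvd[OF c mn] .
  ultimately have "(2::int)^m dvd ((i + r n) - (r n - r m))" by (rule dvd_diff)
  then show "(2::int)^m dvd (i + r m)" by simp
qed

lemma in_class_cong:
  "in_class r a m \<Longrightarrow> in_class r i m \<longleftrightarrow> (2::int)^m dvd (i - a)"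
  unfolding in_class_def
proof -
  assume a: "(2::int) ^ m dvd a + r m"
  have "i - a = (i + r m) - (a + r m)" by simp
  then show "((2::int) ^ m dvd i + r m) = ((2::int) ^ m dvd i - a)"
    using a by (metis dvd_add_left_iff dvd_diff diff_add_cancel)
qed

lemma in_class_0[simp]: "in_class r i 0" by (simp add: in_class_def)

lemma in_class_shift:
  "m \<le> n \<Longrightarrow> in_class r (x + 2^n) m \<longleftrightarrow> in_class r x m"
  unfolding in_class_def
proof -
  assume "m \<le> n"
  then have "(2::int)^m dvd 2^n" by (rule le_imp_power_dvd)
  have "x + 2 ^ n + r m = (x + r m) + 2^n" by simp
  then show "((2::int) ^ m dvd x + 2 ^ n + r m) = ((2::int) ^ m dvd x + r m)"
    using \<open>(2::int)^m dvd 2^n\<close> by (metis dvd_add_left_iff)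
qed

lemma in_class_split:
  "coherent r \<Longrightarrow> in_class r a m \<Longrightarrow> in_class r a (Suc m) \<longleftrightarrow> \<not> in_class r (a + 2^m) (Suc m)"
proof -
  assume c: "coherent r" and a: "in_class r a m"
  have "(2::int)^m dvd (a + r m)" using a by (simp add: in_class_def)
  moreover have "(2::int)^m dvd (r (Suc m) - r m)" using coherent_dvd[OF c, of m "Suc m"] by simp
  ultimately have "(2::int)^m dvd ((a + r m) + (r (Suc m) - r m))" by (rule dvd_add)
  then obtain t where t: "a + r (Suc m) = 2^m * t" by (auto simp: algebra_simps elim!: dvdE)
  have e1: "in_class r a (Suc m) \<longleftrightarrow> even t"
    unfolding in_class_def t by (simp add: mult_dvd_mono)
  have "a + 2^m + r (Suc m) = 2^m * (t + 1)" using t by (simp add: algebra_simps)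
  then have e2: "in_class r (a + 2^m) (Suc m) \<longleftrightarrow> even (t+1)"
    unfolding in_class_def by (simp add: mult_dvd_mono)
  show ?thesis using e1 e2 by simp
qed

lemma exact_level: assumes "coherent r" "\<not> (\<forall>m. in_class r i m)" shows "\<exists>l. in_class r i l \<and> \<not> in_class r i (Suc l)"
proof (rule ccontr)
  assume "\<not> (\<exists>l. in_class r i l \<and> \<not> in_class r i (Suc l))"
  then have "in_class r i m" for m by (induction m) auto
  then show False using assms(2) by blast
qed

lemma exact_level_point:
  assumes "coherent r"
  shows "in_class r (2^L - r (Suc L)) L \<and> \<not> in_class r (2^L - r (Suc L)) (Suc L)"
proof
  have "(2::int)^L dvd (r (Suc L) - r L)" using coherent_dvd[OF assms, of L "Suc L"] by simp
  then have "(2::int)^L dvd (2^L - (r (Suc L) - r L))" by (simp add: dvd_diff)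
  then show "in_class r (2^L - r (Suc L)) L" unfolding in_class_def by (simp add: algebra_simps)
  show "\<not> in_class r (2^L - r (Suc L)) (Suc L)" unfolding in_class_def by simp
qed

lemma cong_shift:
  assumes cr: "coherent r" and cs: "coherent s" and v: "(2::int)^M dvd (v + r M - s M)" and m: "m \<le> M"
  shows "in_class r (j + v) m \<longleftrightarrow> in_class s j m"
proof -
  have d1: "(2::int)^m dvd (v + r M - s M)" using v m by (meson dvd_trans le_imp_power_dvd)
  have d2: "(2::int)^m dvd (r M - r m)" using coherent_dvd[OF cr m] .
  have d3: "(2::int)^m dvd (s M - s m)" using coherent_dvd[OF cs m] .
  have "(j + v + r m) = (j + s m) + ((v + r M - s M) - (r M - r m) + (s M - s m))" by simp
  moreover have "(2::int)^m dvd ((v + r M - s M) - (r M - r m) + (s M - s m))"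
    using dvd_add[OF dvd_diff[OF d1 d2] d3] .
  ultimately show ?thesis unfolding in_class_def by (metis dvd_add_left_iff)
qed

section \<open>The Toeplitz subshift of d\<close>

definition symbol :: "(nat \<Rightarrow> nat) \<Rightarrow> nat \<Rightarrow> nat" where
  "symbol d l = (if even l then 2 else graph_bit d (l div 2))"

lemma symbol_2: "symbol d l = 2 \<longleftrightarrow> even l"
  using graph_bit_le[of d "l div 2"] by (auto simp: symbol_def)

lemma symbol_less: "symbol d l < 3"
  using graph_bit_le[of d "l div 2"] by (auto simp: symbol_def)

definition toeplitz :: "(nat \<Rightarrow> nat) \<Rightarrow> (nat \<Rightarrow> int) \<Rightarrow> (int \<Rightarrow> nat) \<Rightarrow> bool" where
  "toeplitz d r y \<longleftrightarrow> coherent r \<and> (\<forall>i l. in_class r i l \<and> \<not> in_class r i (Suc l) \<longrightarrow> y i = symbol d l) \<and>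
     (\<forall>i. (\<forall>m. in_class r i m) \<longrightarrow> (\<forall>M. \<exists>L\<ge>M. symbol d L = y i))"

definition toeplitz_shift :: "(nat \<Rightarrow> nat) \<Rightarrow> (int \<Rightarrow> nat) set" where
  "toeplitz_shift d = {y. \<exists>r. toeplitz d r y}"

lemma toeplitz_level:
  "toeplitz d r y \<Longrightarrow> in_class r i l \<Longrightarrow> \<not> in_class r i (Suc l) \<Longrightarrow> y i = symbol d l"
  unfolding toeplitz_def by blast

lemma toeplitz_recurring:
  assumes y: "toeplitz d r y" and i: "in_class r i M"
  shows "\<exists>L\<ge>M. symbol d L = y i"
proof (cases "\<forall>m. in_class r i m")
  case True then show ?thesis using y unfolding toeplitz_def by blast
next
  case False
  have c: "coherent r" using y by (simp add: toeplitz_def)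
  obtain l where l: "in_class r i l" "\<not> in_class r i (Suc l)" using exact_level[OF c False] by blast
  have "M \<le> l"
  proof (rule ccontr)
    assume "\<not> M \<le> l"
    then have "Suc l \<le> M" by simp
    then show False using in_class_mono[OF c _ i] l(2) by blast
  qed
  then show ?thesis using toeplitz_level[OF y l] by auto
qed

lemma toeplitz_less3: assumes "toeplitz d r y" shows "y i < 3"
proof -
  obtain L where "symbol d L = y i" using toeplitz_recurring[OF assms in_class_0] by blast
  then show ?thesis using symbol_less by metis
qed

lemma toeplitz_translate: assumes "toeplitz d r y" shows "toeplitz d (\<lambda>m. r m + v) (shift v y)"
proof -
  have e: "in_class (\<lambda>m. r m + v) i m \<longleftrightarrow> in_class r (i + v) m" for i m
    unfolding in_class_def by (simp add: algebra_simps)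
  have c: "coherent (\<lambda>m. r m + v)" using assms unfolding toeplitz_def coherent_def
    by (metis mod_add_left_eq)
  show ?thesis using assms c unfolding toeplitz_def e shift_def by blast
qed

subsection \<open>Reading the skeleton off a point\<close>

text \<open>Given the base a of the level-m class, the two positions a and a + 2^(m+1) tell whether a lies on level m.\<close>
definition level_test :: "(nat \<Rightarrow> nat) \<Rightarrow> nat \<Rightarrow> nat \<Rightarrow> bool" where
  "level_test Y m a \<longleftrightarrow> (if even m then Y a = 2 \<and> Y (a + 2^Suc m) = 2 else Y a \<noteq> 2 \<and> Y (a + 2^Suc m) \<noteq> 2)"

text \<open>base Y m is the least nonnegative element of the level-m class, computed level by level from the nonnegative half Y of a point.\<close>
primrec base :: "(nat \<Rightarrow> nat) \<Rightarrow> nat \<Rightarrow> nat" where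
  "base Y 0 = 0"
| "base Y (Suc m) = (if level_test Y m (base Y m) then base Y m + 2^m else base Y m)"

definition right_half :: "(int \<Rightarrow> nat) \<Rightarrow> nat \<Rightarrow> nat" where
  "right_half y p = y (int p)"

lemma base_less: "base Y m < 2^m"
  by (induction m) auto

lemma level_test_exact: assumes g: "toeplitz d r y" and a: "in_class r (int a) m"
  shows "level_test (right_half y) m a \<longleftrightarrow> \<not> in_class r (int a) (Suc m)"
proof -
  have c: "coherent r" using g by (simp add: toeplitz_def)
  show ?thesis
  proof (cases "in_class r (int a) (Suc m)")
    case False
    have s1: "in_class r (int (a + 2^Suc m)) m" using a in_class_shift[of m "Suc m" r "int a"] by simp
    have s2: "\<not> in_class r (int (a + 2^Suc m)) (Suc m)" using False in_class_shift[of "Suc m" "Suc m" r "int a"] by simp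
    have "right_half y a = symbol d m" using toeplitz_level[OF g a False] by (simp add: right_half_def)
    moreover have "right_half y (a + 2^Suc m) = symbol d m" using toeplitz_level[OF g s1 s2] by (simp add: right_half_def)
    ultimately show ?thesis using False symbol_2[of d m] by (auto simp: level_test_def)
  next
    case True
    have s1: "in_class r (int (a + 2^Suc m)) (Suc m)" using True in_class_shift[of "Suc m" "Suc m" r "int a"] by simp
    have sp: "in_class r (int a) (Suc (Suc m)) \<longleftrightarrow> \<not> in_class r (int (a + 2^Suc m)) (Suc (Suc m))"
      using in_class_split[OF c True] by simp
    have "right_half y a = symbol d (Suc m) \<or> right_half y (a + 2^Suc m) = symbol d (Suc m)"
      using toeplitz_level[OF g True] toeplitz_level[OF g s1] sp by (auto simp: right_half_def)
    then show ?thesis using True symbol_2[of d "Suc m"] by (auto simp: level_test_def)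
  qed
qed

lemma base_correct: assumes g: "toeplitz d r y" shows "in_class r (int (base (right_half y) m)) m"
proof (induction m)
  case 0 then show ?case by simp
next
  case (Suc m)
  have c: "coherent r" using g by (simp add: toeplitz_def)
  show ?case
  proof (cases "level_test (right_half y) m (base (right_half y) m)")
    case True
    then have "\<not> in_class r (int (base (right_half y) m)) (Suc m)" using level_test_exact[OF g Suc.IH] by simp
    then have "in_class r (int (base (right_half y) m) + 2^m) (Suc m)" using in_class_split[OF c Suc.IH] by simp
    then show ?thesis using True by simp
  next
    case False
    then show ?thesis using level_test_exact[OF g Suc.IH] by simp
  qed
qed

lemma base_local:
  "(\<And>p. p < 2^Suc m \<Longrightarrow> Y p = Y' p) \<Longrightarrow> base Y m = base Y' m"
proof (induction m)
  case 0 then show ?case by simp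
next
  case (Suc m)
  have IH: "base Y m = base Y' m" using Suc.prems by (intro Suc.IH) (simp add: less_trans[of _ "2^Suc m" "2^Suc (Suc m)"])
  have q: "base Y m < 2^m" by (rule base_less)
  have "Y (base Y m) = Y' (base Y m)" using q by (intro Suc.prems) (simp add: less_trans[of _ "2^m" "2^Suc (Suc m)"])
  moreover have "Y (base Y m + 2^Suc m) = Y' (base Y m + 2^Suc m)" using q by (intro Suc.prems) simp
  ultimately have "level_test Y m (base Y m) = level_test Y' m (base Y' m)" using IH by (simp add: level_test_def)
  then show ?case using IH by simp
qed

lemma toeplitz_canon:
  "toeplitz d r y \<Longrightarrow> in_class r i m \<longleftrightarrow> (2::int)^m dvd (i - int (base (right_half y) m))"
  using in_class_cong[OF base_correct] by blast

lemma coherent_canon: "coherent (\<lambda>m. - int (base Y m))"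
  unfolding coherent_def
proof
  fix m
  show "- int (base Y (Suc m)) mod 2 ^ m = - int (base Y m) mod 2 ^ m"
  proof (cases "level_test Y m (base Y m)")
    case True
    have "- int (base Y m + 2^m) = - int (base Y m) + (-1) * 2^m" by simp
    then show ?thesis using True by (simp only: base.simps if_True) (metis mod_mult_self1)
  next
    case False then show ?thesis by simp
  qed
qed

lemma agree_base: assumes "\<forall>i. \<bar>i\<bar> \<le> int n \<longrightarrow> y i = c i" "2^Suc M \<le> n" "m \<le> M"
  shows "base (right_half y) m = base (right_half c) m"
proof (rule base_local)
  fix p :: nat assume "p < 2^Suc m"
  moreover have "(2::nat)^Suc m \<le> 2^Suc M" using assms(3) by (simp add: power_increasing)
  ultimately have "int p \<le> int n" using assms(2) by linarith
  then show "right_half y p = right_half c p" using assms(1) by (simp add: right_half_def)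
qed

lemma limit_point_local:
  assumes lim: "\<forall>n. \<exists>y\<in>toeplitz_shift d. \<forall>i. \<bar>i\<bar> \<le> int n \<longrightarrow> y i = c i"
  shows "\<exists>y r. toeplitz d r y \<and> y i = c i \<and>
           (\<forall>m\<le>M. in_class r i m \<longleftrightarrow> in_class (\<lambda>m. - int (base (right_half c) m)) i m)"
proof -
  obtain y where y: "y \<in> toeplitz_shift d"
    and agree: "\<forall>j. \<bar>j\<bar> \<le> int (max (nat \<bar>i\<bar>) (2^Suc M)) \<longrightarrow> y j = c j"
    using lim by blast
  obtain r where r: "toeplitz d r y" using y unfolding toeplitz_shift_def by blast
  have "in_class r i m \<longleftrightarrow> in_class (\<lambda>m. - int (base (right_half c) m)) i m" if "m \<le> M" for m
  proof -
    have "base (right_half y) m = base (right_half c) m" by (rule agree_base[OF agree _ that]) simp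
    then show ?thesis using toeplitz_canon[OF r] unfolding in_class_def by simp
  qed
  moreover have "y i = c i" using agree by simp
  ultimately show ?thesis using r by blast
qed

text \<open>X_d is closed: a limit point follows the skeleton recovered from it.\<close>
lemma closed_toeplitz_shift: "closed_cfg (toeplitz_shift d)"
  unfolding closed_cfg_def
proof (intro allI impI)
  fix c
  assume lim: "\<forall>n. \<exists>y\<in>toeplitz_shift d. \<forall>i. \<bar>i\<bar> \<le> int n \<longrightarrow> y i = c i"
  define rc where "rc = (\<lambda>m. - int (base (right_half c) m))"
  have "toeplitz d rc c"
    unfolding toeplitz_def
  proof (intro conjI allI impI)
    show "coherent rc" unfolding rc_def by (rule coherent_canon)
  next
    fix i l assume a: "in_class rc i l \<and> \<not> in_class rc i (Suc l)"
    obtain y r where r: "toeplitz d r y" and yc: "y i = c i"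
      and eq: "\<forall>m\<le>Suc l. in_class r i m \<longleftrightarrow> in_class rc i m"
      using limit_point_local[OF lim] unfolding rc_def by blast
    have "in_class r i l" "\<not> in_class r i (Suc l)" using eq a by auto
    then show "c i = symbol d l" using toeplitz_level[OF r] yc by simp
  next
    fix i M assume "\<forall>m. in_class rc i m"
    moreover obtain y r where r: "toeplitz d r y" and yc: "y i = c i"
      and eq: "\<forall>m\<le>M. in_class r i m \<longleftrightarrow> in_class rc i m"
      using limit_point_local[OF lim] unfolding rc_def by blast
    ultimately have "in_class r i M" by simp
    then have "\<exists>L\<ge>M. symbol d L = y i" by (rule toeplitz_recurring[OF r])
    then show "\<exists>L\<ge>M. symbol d L = c i" using yc by simp
  qed
  then show "c \<in> toeplitz_shift d" unfolding toeplitz_shift_def by blast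
qed

lemma subshift_toeplitz_shift: "subshift 3 (toeplitz_shift d)"
  unfolding subshift_def
proof (intro conjI closed_toeplitz_shift ballI allI)
  show "toeplitz_shift d \<subseteq> {c. \<forall>i. c i < 3}" unfolding toeplitz_shift_def using toeplitz_less3 by blast
next
  fix c v assume "c \<in> toeplitz_shift d"
  then show "shift v c \<in> toeplitz_shift d" unfolding toeplitz_shift_def using toeplitz_translate by blast
qed

lemma aligned_agree:
  assumes y: "toeplitz d r y" and w: "toeplitz d s w" and v: "(2::int)^M dvd (v + r M - s M)"
    and j: "\<not> in_class s j M"
  shows "y (j + v) = w j"
proof -
  have cr: "coherent r" and cs: "coherent s" using y w by (auto simp: toeplitz_def)
  obtain l where l: "in_class s j l" "\<not> in_class s j (Suc l)" using exact_level[OF cs] j by blast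
  have "l < M"
  proof (rule ccontr)
    assume "\<not> l < M"
    then have "in_class s j M" using in_class_mono[OF cs _ l(1)] by simp
    then show False using j by simp
  qed
  then have "in_class r (j + v) l" "\<not> in_class r (j + v) (Suc l)"
    using cong_shift[OF cr cs v] l by auto
  then show ?thesis using toeplitz_level[OF y] toeplitz_level[OF w l] by simp
qed

text \<open>A window of radius N meets the level-(N+2) class in at most one position.\<close>
lemma window_small: "2 * int N < 2 ^ (N + 2)"
proof -
  have "N < 2^N" by (rule less_exp)
  then have "2 * N < 4 * 2^N" by linarith
  then have "2 * N < 2^(N+2)" by (simp add: power_add)
  then show ?thesis by (metis of_nat_less_iff of_nat_mult of_nat_numeral of_nat_power)
qed

text \<open>Align the skeletons to a level M
  exceeding the window size; at most one position i of the window lies in the level-M class,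
  and its symbol recurs on a level L \<ge> M, which we make i land on.\<close>
lemma window_occurs:
  assumes y: "toeplitz d r y" and w: "toeplitz d s w"
  shows "\<exists>v. \<forall>j. \<bar>j\<bar> \<le> int N \<longrightarrow> y (j + v) = w j"
proof (cases "\<exists>i. \<bar>i\<bar> \<le> int N \<and> in_class s i (N + 2)")
  case False
  have "(2::int)^(N + 2) dvd ((s (N + 2) - r (N + 2)) + r (N + 2) - s (N + 2))" by simp
  then show ?thesis using aligned_agree[OF y w] False by blast
next
  case True
  let ?M = "N + 2"
  have cr: "coherent r" using y by (simp add: toeplitz_def)
  obtain i where i: "\<bar>i\<bar> \<le> int N" "in_class s i ?M" using True by blast
  obtain L where L: "?M \<le> L" "symbol d L = w i" using toeplitz_recurring[OF w i(2)] by blast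
  define t where "t = 2^L - r (Suc L)"
  have t: "in_class r t L" "\<not> in_class r t (Suc L)" using exact_level_point[OF cr] unfolding t_def by auto
  define v where "v = t - i"
  have v: "(2::int)^?M dvd (v + r ?M - s ?M)"
  proof -
    have "v + r ?M - s ?M = (t + r ?M) - (i + s ?M)" unfolding v_def by simp
    moreover have "(2::int)^?M dvd (t + r ?M) - (i + s ?M)"
      using in_class_mono[OF cr L(1) t(1)] i(2) unfolding in_class_def by (rule dvd_diff)
    ultimately show ?thesis by metis
  qed
  have "y (j + v) = w j" if j: "\<bar>j\<bar> \<le> int N" for j
  proof (cases "j = i")
    case True then show ?thesis using toeplitz_level[OF y t] L unfolding v_def by simp
  next
    case False
    have "\<not> in_class s j ?M"
    proof
      assume "in_class s j ?M"
      then have "(2::int)^?M dvd (j - i)" using in_class_cong[OF i(2)] by simp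
      moreover have "j - i \<noteq> 0" using False by simp
      ultimately have "\<bar>(2::int)^?M\<bar> \<le> \<bar>j - i\<bar>" using dvd_imp_le_int by blast
      then show False using window_small[of N] i(1) j by simp
    qed
    then show ?thesis using aligned_agree[OF y w v] by blast
  qed
  then show ?thesis by blast
qed

text \<open>Since every subshift of X_d is closed and contains the windows of all points, X_d is minimal.\<close>
lemma minimal_toeplitz_shift:
  assumes ne: "toeplitz_shift d \<noteq> {}" shows "minimal_subshift 3 (toeplitz_shift d)"
  unfolding minimal_subshift_def
proof (intro conjI subshift_toeplitz_shift ne allI impI)
  fix Y assume Y: "subshift 3 Y \<and> Y \<noteq> {} \<and> Y \<subseteq> toeplitz_shift d"
  then obtain y where yY: "y \<in> Y" by blast
  then obtain r where r: "toeplitz d r y" using Y unfolding toeplitz_shift_def by blast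
  have closed: "closed_cfg Y" and shifts: "\<forall>c\<in>Y. \<forall>v. shift v c \<in> Y" using Y unfolding subshift_def by auto
  have "w \<in> Y" if w: "w \<in> toeplitz_shift d" for w
  proof -
    obtain s where s: "toeplitz d s w" using w unfolding toeplitz_shift_def by blast
    have "\<exists>y'\<in>Y. \<forall>i. \<bar>i\<bar> \<le> int n \<longrightarrow> y' i = w i" for n
    proof -
      obtain v where "\<forall>j. \<bar>j\<bar> \<le> int n \<longrightarrow> y (j + v) = w j" using window_occurs[OF r s] by blast
      then show ?thesis using shifts yY by (intro bexI[of _ "shift v y"]) (auto simp: shift_def)
    qed
    then show ?thesis using closed unfolding closed_cfg_def by blast
  qed
  then show "Y = toeplitz_shift d" using Y by blast
qed

section \<open>Every point computes d\<close>

text \<open>The oracle point_code y lists y on even indices at the nonnegative positions.\<close>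
lemma right_half_point_code: "right_half y p = point_code y (2 * p)"
  by (simp add: right_half_def point_code_def int_decode_def sum_decode_def)

lemma computable_right_half:
  "computable (point_code y) k A \<Longrightarrow> computable (point_code y) k (\<lambda>xs. right_half y (A xs))"
  unfolding right_half_point_code by (intro computable_intros)

lemma decidable_level_test:
  assumes "computable (point_code y) k M" "computable (point_code y) k A"
  shows "decidable (point_code y) k (\<lambda>xs. level_test (right_half y) (M xs) (A xs))"
  unfolding level_test_def using assms by (intro computable_intros computable_right_half)

lemma computable_base1: "computable (point_code y) 1 (\<lambda>xs. base (right_half y) (xs ! 0))"
proof -
  have eq: "rec_nat 0 (\<lambda>n r. if level_test (right_half y) n r then r + 2^n else r) m = base (right_half y) m"
    for m by (induction m) auto
  have "computable (point_code y) (Suc 0) (\<lambda>xs. base (right_half y) (xs ! 0))"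
    by (rule computable_rec_nat[where B="\<lambda>ys. 0"
          and S="\<lambda>zs. if level_test (right_half y) (zs ! 0) (zs ! 1) then zs ! 1 + 2^(zs ! 0) else zs ! 1"];
        (intro computable_intros decidable_level_test)?; simp add: eq cong: if_cong)
  then show ?thesis by simp
qed

lemma computable_base:
  "computable (point_code y) k A \<Longrightarrow> computable (point_code y) k (\<lambda>xs. base (right_half y) (A xs))"
  by (rule computable_app[OF computable_base1])

definition level_position :: "(nat \<Rightarrow> nat) \<Rightarrow> nat \<Rightarrow> nat" where
  "level_position Y m = (if level_test Y m (base Y m) then base Y m else base Y m + 2^m)"

lemma level_position_symbol:
  assumes y: "toeplitz d r y"
  shows "right_half y (level_position (right_half y) m) = symbol d m"
proof -
  let ?a = "base (right_half y) m"
  have c: "coherent r" using y by (simp add: toeplitz_def)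
  have a: "in_class r (int ?a) m" by (rule base_correct[OF y])
  show ?thesis
  proof (cases "level_test (right_half y) m ?a")
    case True
    then have "\<not> in_class r (int ?a) (Suc m)" using level_test_exact[OF y a] by simp
    then show ?thesis using True toeplitz_level[OF y a] by (simp add: level_position_def right_half_def)
  next
    case False
    then have "in_class r (int ?a) (Suc m)" using level_test_exact[OF y a] by simp
    then have "\<not> in_class r (int ?a + 2^m) (Suc m)" using in_class_split[OF c a] by simp
    moreover have "in_class r (int ?a + 2^m) m" using a in_class_shift[of m m r "int ?a"] by simp
    ultimately show ?thesis using False toeplitz_level[OF y] by (simp add: level_position_def right_half_def)
  qed
qed

text \<open>The graph bits of d are the symbols on odd levels, found at computable positions.\<close>
theorem toeplitz_computes_d: assumes y: "toeplitz d r y" shows "turing_red d (point_code y)"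
proof (rule turing_red_from_graph_bit)
  have "computable (point_code y) 1 (\<lambda>xs. right_half y (level_position (right_half y) (2 * xs ! 0 + 1)))"
    unfolding level_position_def
    by (intro computable_right_half computable_intros decidable_level_test computable_base) simp_all
  then show "computable (point_code y) 1 (\<lambda>xs. graph_bit d (xs ! 0))"
    by (rule computable_ext) (simp add: level_position_symbol[OF y] symbol_def)
qed

section \<open>A point of prescribed degree above d\<close>

text \<open>Skeleton digits for an oracle e: on even places the pattern 0,1 repeats with period 4, which
  leaves no integer of infinite level; the odd places carry the graph bits of e.\<close>
definition digit :: "(nat \<Rightarrow> nat) \<Rightarrow> nat \<Rightarrow> nat" where
  "digit e j = (if even j then (if j mod 4 = 0 then 0 else 1) else graph_bit e (j div 2))"

lemma digit_01: "digit e j = 0 \<or> digit e j = 1"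
  using graph_bit_le[of e "j div 2"] by (auto simp: digit_def)

lemma digit_4: "digit e (4 * k) = 0" "digit e (4 * k + 2) = 1"
proof -
  have "(4 * k + 2) mod 4 = (2::nat)" by presburger
  then show "digit e (4 * k + 2) = 1" by (simp add: digit_def)
  show "digit e (4 * k) = 0" by (simp add: digit_def)
qed

primrec skel :: "(nat \<Rightarrow> nat) \<Rightarrow> nat \<Rightarrow> nat" where
  "skel e 0 = 0"
| "skel e (Suc m) = skel e m + digit e m * 2^m"

lemma skel_less: "skel e m < 2^m"
proof (induction m)
  case 0 then show ?case by simp
next
  case (Suc m)
  have "digit e m * 2^m \<le> 2^m" using digit_01[of e m] by auto
  then show ?case using Suc.IH by (simp only: skel.simps power_Suc)
qed

definition skel_class :: "(nat \<Rightarrow> nat) \<Rightarrow> nat \<Rightarrow> int" where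
  "skel_class e m = - int (skel e m)"

lemma coherent_skel_class: "coherent (skel_class e)"
  unfolding coherent_def skel_class_def
proof
  fix m
  have "- int (skel e (Suc m)) = - int (skel e m) + (- int (digit e m)) * 2^m" by simp
  then show "- int (skel e (Suc m)) mod 2 ^ m = - int (skel e m) mod 2 ^ m"
    by (metis mod_mult_self1)
qed

lemma in_class_skel_class:
  "in_class (skel_class e) i m \<longleftrightarrow> (2::int)^m dvd (i - int (skel e m))"
  by (simp add: in_class_def skel_class_def)

lemma small_in_class_skel:
  assumes dv: "(2::int)^m dvd (i - int (skel e m))" and big: "\<bar>i\<bar> < 2^m"
  shows "i - int (skel e m) = 0 \<or> i - int (skel e m) = - (2^m)"
proof -
  obtain t where t: "i - int (skel e m) = 2^m * t" using dv by (auto elim: dvdE)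
  have s: "int (skel e m) < 2^m" using skel_less[of e m] by (metis of_nat_less_iff of_nat_numeral of_nat_power)
  have p: "(0::int) < 2^m" by simp
  have "i \<le> \<bar>i\<bar>" "- \<bar>i\<bar> \<le> i" "0 \<le> int (skel e m)" by auto
  then have lower: "2^m * (-2) < 2^m * t" and upper: "2^m * t < 2^m * 1" using t big s by linarith+
  have "-2 < t" using lower mult_less_cancel_left_pos[OF p, of "-2" t] by blast
  moreover have "t < 1" using upper p by (simp add: mult_less_cancel_left_pos)
  ultimately have "t = 0 \<or> t = -1" by linarith
  then show ?thesis using t by auto
qed

lemma infinite_level_digits_constant:
  assumes inf: "\<forall>m. in_class (skel_class e) i m"
  shows "\<exists>c. \<forall>k. digit e (nat \<bar>i\<bar> + k) = c"
proof -
  define m0 where "m0 = nat \<bar>i\<bar>"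
  let ?D = "\<lambda>m. i - int (skel e m)"
  have dv: "(2::int)^m dvd ?D m" for m using inf in_class_skel_class by blast
  have big: "\<bar>i\<bar> < 2^m" if "m0 \<le> m" for m
  proof -
    have "m0 < 2^m0" by (rule less_exp)
    also have "\<dots> \<le> 2^m" using that by (simp add: power_increasing)
    finally have "int m0 < 2^m" by (metis of_nat_less_iff of_nat_numeral of_nat_power)
    then show ?thesis unfolding m0_def by simp
  qed
  have two: "?D m = 0 \<or> ?D m = - (2^m)" if "m0 \<le> m" for m
    using small_in_class_skel[OF dv big[OF that]] .
  have step: "?D (Suc m) = ?D m - int (digit e m) * 2^m" for m by simp
  have zero: "?D m = 0 \<Longrightarrow> ?D (Suc m) = 0 \<and> digit e m = 0" if "m0 \<le> m" for m
    using two[of "Suc m"] step[of m] digit_01[of e m] that by auto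
  have minus: "?D m = - (2^m) \<Longrightarrow> ?D (Suc m) = - (2^Suc m) \<and> digit e m = 1" if "m0 \<le> m" for m
    using two[of "Suc m"] step[of m] digit_01[of e m] that by auto
  show ?thesis
  proof (cases "?D m0 = 0")
    case True
    then have "?D (m0 + k) = 0 \<and> digit e (m0 + k) = 0" for k
      by (induction k) (use zero in auto)
    then show ?thesis unfolding m0_def by blast
  next
    case False
    then have "?D m0 = - (2^m0)" using two by blast
    then have "?D (m0 + k) = - (2^(m0 + k)) \<and> digit e (m0 + k) = 1" for k
      by (induction k) (use minus in auto)
    then show ?thesis unfolding m0_def by blast
  qed
qed

lemma no_infinite_level: "\<exists>m. \<not> in_class (skel_class e) i m"
proof (rule ccontr)
  assume "\<not> (\<exists>m. \<not> in_class (skel_class e) i m)"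
  then obtain c where c: "\<And>k. digit e (nat \<bar>i\<bar> + k) = c" using infinite_level_digits_constant by blast
  have "c = digit e (4 * nat \<bar>i\<bar>)" using c[of "3 * nat \<bar>i\<bar>"] by simp
  moreover have "c = digit e (4 * nat \<bar>i\<bar> + 2)" using c[of "3 * nat \<bar>i\<bar> + 2"] by simp
  ultimately show False using digit_4[of e "nat \<bar>i\<bar>"] by simp
qed

text \<open>The exact level of i in the skeleton of e; it exists by no_infinite_level.\<close>
definition skel_level :: "(nat \<Rightarrow> nat) \<Rightarrow> int \<Rightarrow> nat" where
  "skel_level e i = (LEAST l. \<not> in_class (skel_class e) i (Suc l))"

lemma skel_level_unique:
  assumes "in_class (skel_class e) i l" "\<not> in_class (skel_class e) i (Suc l)"
  shows "skel_level e i = l"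
  unfolding skel_level_def
proof (rule Least_equality)
  show "\<not> in_class (skel_class e) i (Suc l)" by (rule assms(2))
  show "l \<le> l'" if "\<not> in_class (skel_class e) i (Suc l')" for l'
    using in_class_mono[OF coherent_skel_class _ assms(1), of "Suc l'"] that by (meson not_less_eq_eq)
qed

definition encoding_point :: "(nat \<Rightarrow> nat) \<Rightarrow> (nat \<Rightarrow> nat) \<Rightarrow> int \<Rightarrow> nat" where
  "encoding_point d e i = symbol d (skel_level e i)"

lemma toeplitz_encoding_point: "toeplitz d (skel_class e) (encoding_point d e)"
  unfolding toeplitz_def
proof (intro conjI coherent_skel_class allI impI)
  fix i l assume "in_class (skel_class e) i l \<and> \<not> in_class (skel_class e) i (Suc l)"
  then show "encoding_point d e i = symbol d l" unfolding encoding_point_def using skel_level_unique by auto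
next
  fix i M assume "\<forall>m. in_class (skel_class e) i m"
  then show "\<exists>L\<ge>M. symbol d L = encoding_point d e i" using no_infinite_level by blast
qed

lemma nat_cong_eq: assumes "a < 2^m" "b < 2^m" "(2::int)^m dvd (int a - int b)" shows "a = b"
proof (rule ccontr)
  assume "a \<noteq> b"
  then have "int a - int b \<noteq> 0" by simp
  then have "\<bar>(2::int)^m\<bar> \<le> \<bar>int a - int b\<bar>" using dvd_imp_le_int assms(3) by blast
  moreover have "int a < 2^m" "int b < 2^m" using assms(1,2) by (metis of_nat_less_iff of_nat_numeral of_nat_power)+
  ultimately show False by linarith
qed

text \<open>Reading the skeleton off the encoding point returns exactly skel e, so its level
  tests reveal the digits of e.\<close>
lemma base_encoding_point: "base (right_half (encoding_point d e)) m = skel e m"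
proof -
  have "in_class (skel_class e) (int (base (right_half (encoding_point d e)) m)) m"
    by (rule base_correct[OF toeplitz_encoding_point])
  then have "(2::int)^m dvd (int (base (right_half (encoding_point d e)) m) - int (skel e m))"
    by (simp add: in_class_skel_class)
  then show ?thesis using nat_cong_eq base_less skel_less by blast
qed

lemma level_test_encoding_point:
  "level_test (right_half (encoding_point d e)) m (base (right_half (encoding_point d e)) m) \<longleftrightarrow> digit e m = 1"
  using base_encoding_point[of d e "Suc m"] base_encoding_point[of d e m] digit_01[of e m]
  by (auto split: if_splits)

lemma turing_red_encoding_point: "turing_red e (point_code (encoding_point d e))"
proof (rule turing_red_from_graph_bit)
  let ?Y = "right_half (encoding_point d e)"
  have "computable (point_code (encoding_point d e)) 1
          (\<lambda>xs. if level_test ?Y (2 * xs ! 0 + 1) (base ?Y (2 * xs ! 0 + 1)) then 1 else 0)"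
    by (intro computable_intros decidable_level_test computable_base) simp_all
  then show "computable (point_code (encoding_point d e)) 1 (\<lambda>xs. graph_bit e (xs ! 0))"
  proof (rule computable_ext)
    fix xs :: "nat list"
    have "digit e (2 * xs ! 0 + 1) = graph_bit e (xs ! 0)" by (simp add: digit_def)
    then show "(if level_test ?Y (2 * xs ! 0 + 1) (base ?Y (2 * xs ! 0 + 1)) then 1 else 0) = graph_bit e (xs ! 0)"
      using level_test_encoding_point[of d e "2 * xs ! 0 + 1"] digit_01[of e "2 * xs ! 0 + 1"] by auto
  qed
qed

lemma computable_digit:
  "computable e k A \<Longrightarrow> computable e k (\<lambda>xs. digit e (A xs))"
  unfolding digit_def using turing_red_refl by (intro computable_intros computable_graph_bit)

lemma computable_skel1: "computable e 1 (\<lambda>xs. skel e (xs ! 0))"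
proof -
  have eq: "rec_nat 0 (\<lambda>n r. r + digit e n * 2^n) m = skel e m" for m by (induction m) auto
  have "computable e (Suc 0) (\<lambda>xs. skel e (xs ! 0))"
    by (rule computable_rec_nat[where B="\<lambda>ys. 0" and S="\<lambda>zs. zs ! 1 + digit e (zs ! 0) * 2^(zs ! 0)"];
        (intro computable_intros computable_digit)?; simp add: eq)
  then show ?thesis by simp
qed

lemma computable_skel:
  "computable e k A \<Longrightarrow> computable e k (\<lambda>xs. skel e (A xs))"
  by (rule computable_app[OF computable_skel1])

text \<open>Whether the n-th integer lies outside the class of level l + 1, tested on natural numbers.\<close>
definition escapes :: "(nat \<Rightarrow> nat) \<Rightarrow> nat \<Rightarrow> nat \<Rightarrow> bool" where
  "escapes e l n \<longleftrightarrow> (if even n then (n div 2) mod 2^(Suc l) \<noteq> skel e (Suc l)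
                 else (n div 2 + 1 + skel e (Suc l)) mod 2^(Suc l) \<noteq> 0)"

lemma escapes_iff:
  "escapes e l n \<longleftrightarrow> \<not> in_class (skel_class e) (int_decode n) (Suc l)"
proof -
  let ?M = "Suc l" let ?S = "skel e (Suc l)" let ?p = "n div 2"
  have Sl: "?S mod 2^?M = ?S" by (rule mod_less[OF skel_less])
  show ?thesis
  proof (cases "even n")
    case True
    have i: "int_decode n = int ?p" using True by (simp add: int_decode_def sum_decode_def)
    have "in_class (skel_class e) (int_decode n) ?M \<longleftrightarrow> (2::int)^?M dvd (int ?p - int ?S)"
      by (simp add: in_class_skel_class i)
    also have "\<dots> \<longleftrightarrow> int ?p mod 2^?M = int ?S mod 2^?M" by (simp add: mod_eq_dvd_iff)
    also have "\<dots> \<longleftrightarrow> int (?p mod 2^?M) = int (?S mod 2^?M)" by (simp add: zmod_int)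
    also have "\<dots> \<longleftrightarrow> ?p mod 2^?M = ?S" by (simp only: Sl of_nat_eq_iff)
    finally show ?thesis using True by (simp add: escapes_def)
  next
    case False
    have "int_decode n - int ?S = - int (?p + 1 + ?S)"
      using False by (simp add: int_decode_def sum_decode_def)
    then have "in_class (skel_class e) (int_decode n) ?M \<longleftrightarrow> (2::int)^?M dvd - int (?p + 1 + ?S)"
      by (simp only: in_class_skel_class)
    also have "\<dots> \<longleftrightarrow> (2::int)^?M dvd int (?p + 1 + ?S)" by (rule dvd_minus_iff)
    also have "\<dots> \<longleftrightarrow> (2::nat)^?M dvd (?p + 1 + ?S)" by (metis of_nat_dvd_iff of_nat_numeral of_nat_power)
    also have "\<dots> \<longleftrightarrow> (?p + 1 + ?S) mod 2^?M = 0" by (rule dvd_eq_mod_eq_0)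
    finally show ?thesis using False by (simp add: escapes_def)
  qed
qed

lemma computable_skel_level: "computable e 1 (\<lambda>xs. skel_level e (int_decode (xs ! 0)))"
proof -
  have "computable e 1 (\<lambda>xs. LEAST l. (\<lambda>ys. escapes e (ys ! 0) (ys ! 1)) (l # xs))"
  proof (rule computable_LEAST)
    show "decidable e (Suc 1) (\<lambda>ys. escapes e (ys ! 0) (ys ! 1))"
      unfolding escapes_def by (intro computable_intros computable_skel; simp)
    show "\<exists>l. escapes e ((l # xs) ! 0) ((l # xs) ! 1)" for xs :: "nat list"
    proof -
      obtain m where "\<not> in_class (skel_class e) (int_decode (xs ! 0)) m" using no_infinite_level by blast
      then obtain l where "\<not> in_class (skel_class e) (int_decode (xs ! 0)) (Suc l)" by (cases m) auto
      then show ?thesis using escapes_iff by auto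
    qed
  qed
  then show ?thesis by (simp add: skel_level_def escapes_iff)
qed

lemma turing_red_from_encoding_point:
  assumes "turing_red d e" shows "turing_red (point_code (encoding_point d e)) e"
  unfolding turing_red_iff_computable point_code_def encoding_point_def symbol_def comp_def
  using assms by (intro computable_intros computable_graph_bit computable_app[OF computable_skel_level]) simp_all

lemma toeplitz_shift_degrees:
  "(\<lambda>x. tdeg (point_code x)) ` toeplitz_shift d = {tdeg e | e. turing_red d e}"
proof (intro equalityI subsetI)
  fix z assume "z \<in> (\<lambda>x. tdeg (point_code x)) ` toeplitz_shift d"
  then obtain x r where "z = tdeg (point_code x)" "toeplitz d r x" unfolding toeplitz_shift_def by blast
  then show "z \<in> {tdeg e | e. turing_red d e}" using toeplitz_computes_d by blast
next
  fix z assume "z \<in> {tdeg e | e. turing_red d e}"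
  then obtain e where e: "turing_red d e" "z = tdeg e" by blast
  have "turing_equiv (point_code (encoding_point d e)) e"
    unfolding turing_equiv_def using turing_red_from_encoding_point[OF e(1)] turing_red_encoding_point by blast
  moreover have "encoding_point d e \<in> toeplitz_shift d"
    unfolding toeplitz_shift_def using toeplitz_encoding_point by blast
  ultimately show "z \<in> (\<lambda>x. tdeg (point_code x)) ` toeplitz_shift d" using e(2) tdeg_eq by force
qed

theorem theorem2:
  fixes d :: "nat \<Rightarrow> nat"
  shows "\<exists>(k::nat) (X :: (int \<Rightarrow> nat) set).
           minimal_subshift k X \<and>
           (\<lambda>x. tdeg (point_code x)) ` X = {tdeg e | e. turing_red d e}"
proof (intro exI conjI)
  have "encoding_point d d \<in> toeplitz_shift d"
    unfolding toeplitz_shift_def using toeplitz_encoding_point by blast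
  then show "minimal_subshift 3 (toeplitz_shift d)" using minimal_toeplitz_shift by blast
  show "(\<lambda>x. tdeg (point_code x)) ` toeplitz_shift d = {tdeg e | e. turing_red d e}"
    by (rule toeplitz_shift_degrees)
qed

end
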